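(* Let $k>l\ge0$ be integers, $\xi\in\mathbb{C}$, $f:\mathbb{N}\to[0,\infty)$, and $A=\xi(a^\dagger)^ka^l+\xi^*(a^\dagger)^la^k+f(a^\dagger a)$ with domain $\mathcal{D}_0$. Then $A$ has equal deficiency indices $\dim\operatorname{Ran}(A+i)^\perp=\dim\operatorname{Ran}(A-i)^\perp$, and thus admits self-adjoint extensions.
   Context: $\mathbb{N}=\{0,1,2,\dots\}$. $\mathcal{H}$ is a separable complex Hilbert space with orthonormal basis $(\phi_n)_{n\in\mathbb{N}}$; $\mathcal{D}_0$ is the set of finite linear combinations of the $\phi_n$. The operators $a,a^\dagger$ have domain $\mathcal{D}_0$ and act by $a\phi_n=\sqrt{n}\,\phi_{n-1}$ ($a\phi_0=0$), $a^\dagger\phi_n=\sqrt{n+1}\,\phi_{n+1}$, extended linearly. $f(a^\dagger a)$ has domain $\mathcal{D}_0$ and $f(a^\dagger a)\phi_n=f(n)\phi_n$. *)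

theory Defs
  imports "HOL-Analysis.Analysis"
begin

text \<open>The Hilbert space H is realised as l2(N): coefficient sequences
  x :: nat => complex w.r.t. the orthonormal basis phi_n (phi_n = indicator of n),
  with square-summable modulus.\<close>

definition l2 :: "(nat \<Rightarrow> complex) set" where
  "l2 = {x. summable (\<lambda>n. (cmod (x n))\<^sup>2)}"

definition l2_inner :: "(nat \<Rightarrow> complex) \<Rightarrow> (nat \<Rightarrow> complex) \<Rightarrow> complex" where
  "l2_inner x y = (\<Sum>n. cnj (x n) * y n)"

definition D0 :: "(nat \<Rightarrow> complex) set" where
  "D0 = {x. finite {n. x n \<noteq> 0}}"

text \<open>Annihilation operator: a phi_n = sqrt n phi_(n-1), a phi_0 = 0.\<close>
definition ann :: "(nat \<Rightarrow> complex) \<Rightarrow> (nat \<Rightarrow> complex)" where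
  "ann x = (\<lambda>m. complex_of_real (sqrt (real (Suc m))) * x (Suc m))"

text \<open>Creation operator: a^dagger phi_n = sqrt (n+1) phi_(n+1).\<close>
definition cre :: "(nat \<Rightarrow> complex) \<Rightarrow> (nat \<Rightarrow> complex)" where
  "cre x = (\<lambda>m. if m = 0 then 0 else complex_of_real (sqrt (real m)) * x (m - 1))"

text \<open>f(a^dagger a) phi_n = f(n) phi_n.\<close>
definition numfun :: "(nat \<Rightarrow> real) \<Rightarrow> (nat \<Rightarrow> complex) \<Rightarrow> (nat \<Rightarrow> complex)" where
  "numfun f x = (\<lambda>m. complex_of_real (f m) * x m)"

definition opA :: "nat \<Rightarrow> nat \<Rightarrow> complex \<Rightarrow> (nat \<Rightarrow> real)
    \<Rightarrow> (nat \<Rightarrow> complex) \<Rightarrow> (nat \<Rightarrow> complex)" where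
  "opA k l \<xi> f x = (\<lambda>m. \<xi> * (cre ^^ k) ((ann ^^ l) x) m
                       + cnj \<xi> * (cre ^^ l) ((ann ^^ k) x) m
                       + numfun f x m)"

text \<open>Orthogonal complement of Ran(T + c) for T with domain D0, inside l2.\<close>
definition defect_space :: "((nat \<Rightarrow> complex) \<Rightarrow> (nat \<Rightarrow> complex)) \<Rightarrow> complex
    \<Rightarrow> (nat \<Rightarrow> complex) set" where
  "defect_space T c = {\<psi> \<in> l2. \<forall>\<phi>\<in>D0. l2_inner \<psi> (\<lambda>m. T \<phi> m + c * \<phi> m) = 0}"

definition is_onb :: "(nat \<Rightarrow> complex) set \<Rightarrow> (nat \<Rightarrow> complex) set \<Rightarrow> bool" where
  "is_onb M B \<longleftrightarrow> B \<subseteq> M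
     \<and> (\<forall>b\<in>B. \<forall>b'\<in>B. l2_inner b b' = (if b = b' then 1 else 0))
     \<and> (\<forall>\<psi>\<in>M. (\<forall>b\<in>B. l2_inner b \<psi> = 0) \<longrightarrow> \<psi> = (\<lambda>_. 0))"

definition same_hilbert_dim :: "(nat \<Rightarrow> complex) set \<Rightarrow> (nat \<Rightarrow> complex) set \<Rightarrow> bool" where
  "same_hilbert_dim M N \<longleftrightarrow>
     (\<exists>B C g. is_onb M B \<and> is_onb N C \<and> bij_betw g B C)"

definition selfadjoint_op :: "(nat \<Rightarrow> complex) set \<Rightarrow> ((nat \<Rightarrow> complex) \<Rightarrow> (nat \<Rightarrow> complex)) \<Rightarrow> bool" where
  "selfadjoint_op D T \<longleftrightarrow>
     D \<subseteq> l2 \<and> (\<forall>x\<in>D. T x \<in> l2)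
     \<and> (\<forall>x\<in>D. \<forall>y\<in>D. \<forall>c. (\<lambda>n. x n + c * y n) \<in> D
            \<and> T (\<lambda>n. x n + c * y n) = (\<lambda>n. T x n + c * T y n))
     \<and> (\<forall>\<psi>\<in>l2. \<psi> \<in> D \<longleftrightarrow> (\<exists>\<eta>\<in>l2. \<forall>\<phi>\<in>D. l2_inner \<psi> (T \<phi>) = l2_inner \<eta> \<phi>))
     \<and> (\<forall>\<psi>\<in>D. \<forall>\<phi>\<in>D. l2_inner \<psi> (T \<phi>) = l2_inner (T \<psi>) \<phi>)"

end

theory Submission
  imports Defs
begin

text \<open>
  For \<open>cmod u = 1\<close> the map \<open>(C x) m = u^m * cnj (x m)\<close> is an antiunitary involution of l2
  preserving D0. The two off-diagonal terms of A shift indices by \<open>k - l\<close>, so C commutes with A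
  once \<open>cnj \<xi> * u^(k - l) = \<xi>\<close>, and such a u exists because \<open>k > l\<close>. Then C maps
  \<open>Ran(A + i)\<^sup>\<bottom>\<close> antiunitarily onto \<open>Ran(A - i)\<^sup>\<bottom>\<close>, which gives equal deficiency indices.

  The self-adjoint extension is built directly, in the spirit of von Neumann's theorem on real
  operators: by Zorn's lemma take a maximal C-invariant subspace \<open>D \<supseteq> D0\<close> on which the formal
  operator A is symmetric. Formal symmetry of A against D0 shows that the adjoint of A on D acts
  as A itself. If \<open>\<psi>\<close> lies in the domain of this adjoint, so do its two C-real parts, and a
  C-real vector h there satisfies \<open>\<langle>h, A h\<rangle> = \<langle>A h, h\<rangle>\<close>; hence \<open>D + \<complex> h\<close> is again admissible
  and \<open>h \<in> D\<close> by maximality. So D is the domain of the adjoint.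
\<close>

section \<open>The sequence space\<close>

definition inner_summable :: "(nat \<Rightarrow> complex) \<Rightarrow> (nat \<Rightarrow> complex) \<Rightarrow> bool" where
  "inner_summable x y \<longleftrightarrow> summable (\<lambda>n. cnj (x n) * y n)"

lemma inner_summable_D0_right: "y \<in> D0 \<Longrightarrow> inner_summable x y"
  unfolding inner_summable_def D0_def by (rule summable_finite[of "{n. y n \<noteq> 0}"]) auto

lemma inner_summable_l2:
  assumes "x \<in> l2" "y \<in> l2"
  shows "inner_summable x y"
proof -
  have "norm (cnj (x n) * y n) \<le> (cmod (x n))\<^sup>2 + (cmod (y n))\<^sup>2" for n
  proof -
    have "2 * (cmod (x n) * cmod (y n)) \<le> (cmod (x n))\<^sup>2 + (cmod (y n))\<^sup>2"
      using sum_squares_bound[of "cmod (x n)" "cmod (y n)"] by (simp add: mult.assoc)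
    moreover have "0 \<le> cmod (x n) * cmod (y n)" by simp
    ultimately show ?thesis unfolding norm_mult complex_mod_cnj by linarith
  qed
  moreover have "summable (\<lambda>n. (cmod (x n))\<^sup>2 + (cmod (y n))\<^sup>2)"
    using assms by (intro summable_add) (auto simp: l2_def)
  ultimately show ?thesis
    unfolding inner_summable_def by (auto intro: summable_comparison_test'[where N = 0])
qed

lemma l2_lincomb:
  assumes "x \<in> l2" "y \<in> l2"
  shows "(\<lambda>n. a * x n + b * y n) \<in> l2"
proof -
  have "(cmod (a * x n + b * y n))\<^sup>2 \<le> 2 * (cmod a)\<^sup>2 * (cmod (x n))\<^sup>2 + 2 * (cmod b)\<^sup>2 * (cmod (y n))\<^sup>2"
    for n
  proof -
    have "cmod (a * x n + b * y n) \<le> cmod a * cmod (x n) + cmod b * cmod (y n)"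
      by (metis norm_mult norm_triangle_ineq)
    then have "(cmod (a * x n + b * y n))\<^sup>2 \<le> (cmod a * cmod (x n) + cmod b * cmod (y n))\<^sup>2"
      by (simp add: power_mono)
    also have "\<dots> \<le> 2 * (cmod a * cmod (x n))\<^sup>2 + 2 * (cmod b * cmod (y n))\<^sup>2"
      using sum_squares_bound[of "cmod a * cmod (x n)" "cmod b * cmod (y n)"]
      by (simp add: power2_sum)
    finally show ?thesis by (simp add: power_mult_distrib)
  qed
  moreover have "summable (\<lambda>n. 2 * (cmod a)\<^sup>2 * (cmod (x n))\<^sup>2 + 2 * (cmod b)\<^sup>2 * (cmod (y n))\<^sup>2)"
    using assms by (intro summable_add summable_mult) (auto simp: l2_def)
  ultimately show ?thesis
    unfolding l2_def by (auto intro: summable_comparison_test'[where N = 0])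
qed

lemma l2_inner_sums: "inner_summable x y \<Longrightarrow> (\<lambda>n. cnj (x n) * y n) sums l2_inner x y"
  unfolding inner_summable_def l2_inner_def by (rule summable_sums)

lemma l2_inner_eqI: "(\<lambda>n. cnj (x n) * y n) sums s \<Longrightarrow> l2_inner x y = s"
  unfolding l2_inner_def by (simp add: sums_iff)

lemma l2_inner_lincomb_right:
  assumes "inner_summable x y" "inner_summable x z"
  shows "l2_inner x (\<lambda>n. a * y n + b * z n) = a * l2_inner x y + b * l2_inner x z"
proof (rule l2_inner_eqI)
  have "(\<lambda>n. a * (cnj (x n) * y n) + b * (cnj (x n) * z n)) sums (a * l2_inner x y + b * l2_inner x z)"
    using assms by (intro sums_add sums_mult l2_inner_sums)
  then show "(\<lambda>n. cnj (x n) * (a * y n + b * z n)) sums (a * l2_inner x y + b * l2_inner x z)"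
    by (simp add: algebra_simps)
qed

lemma l2_inner_lincomb_left:
  assumes "inner_summable x z" "inner_summable y z"
  shows "l2_inner (\<lambda>n. a * x n + b * y n) z = cnj a * l2_inner x z + cnj b * l2_inner y z"
proof (rule l2_inner_eqI)
  have "(\<lambda>n. cnj a * (cnj (x n) * z n) + cnj b * (cnj (y n) * z n))
      sums (cnj a * l2_inner x z + cnj b * l2_inner y z)"
    using assms by (intro sums_add sums_mult l2_inner_sums)
  then show "(\<lambda>n. cnj (a * x n + b * y n) * z n) sums (cnj a * l2_inner x z + cnj b * l2_inner y z)"
    by (simp add: algebra_simps)
qed

lemma l2_inner_scale_left:
  "inner_summable x y \<Longrightarrow> l2_inner (\<lambda>n. a * x n) y = cnj a * l2_inner x y"
  using l2_inner_lincomb_left[of x y x a 0] by simp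

lemma l2_inner_scale_right:
  "inner_summable x y \<Longrightarrow> l2_inner x (\<lambda>n. a * y n) = a * l2_inner x y"
  using l2_inner_lincomb_right[of x y y a 0] by simp

lemma l2_inner_commute:
  assumes "inner_summable x y"
  shows "l2_inner y x = cnj (l2_inner x y)"
proof (rule l2_inner_eqI)
  have "(\<lambda>n. cnj (cnj (x n) * y n)) sums cnj (l2_inner x y)"
    using l2_inner_sums[OF assms] by (simp only: sums_cnj)
  then show "(\<lambda>n. cnj (y n) * x n) sums cnj (l2_inner x y)" by (simp add: mult.commute)
qed

lemma l2_inner_self_pos:
  assumes "x \<in> l2" "x \<noteq> (\<lambda>_. 0)"
  shows "\<exists>r>0. l2_inner x x = complex_of_real r"
proof -
  obtain i where "x i \<noteq> 0" using assms(2) by auto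
  have summable: "summable (\<lambda>n. (cmod (x n))\<^sup>2)" using assms(1) by (simp add: l2_def)
  then have "(\<lambda>n. complex_of_real ((cmod (x n))\<^sup>2)) sums complex_of_real (\<Sum>n. (cmod (x n))\<^sup>2)"
    by (intro sums_of_real summable_sums)
  then have "(\<lambda>n. cnj (x n) * x n) sums complex_of_real (\<Sum>n. (cmod (x n))\<^sup>2)"
    by (simp only: complex_norm_square mult.commute)
  moreover have "(\<Sum>n. (cmod (x n))\<^sup>2) > 0"
    using summable \<open>x i \<noteq> 0\<close> by (intro suminf_pos2[of _ i]) auto
  ultimately show ?thesis using l2_inner_eqI by blast
qed

lemma D0_subset_l2: "D0 \<subseteq> l2"
proof
  fix x assume "x \<in> D0"
  then show "x \<in> l2"
    unfolding D0_def l2_def by (intro CollectI summable_finite[of "{n. x n \<noteq> 0}"]) auto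
qed

lemma D0_iff_eventually_zero: "x \<in> D0 \<longleftrightarrow> (\<exists>N. \<forall>n\<ge>N. x n = 0)"
proof
  assume "x \<in> D0"
  then obtain N where "{n. x n \<noteq> 0} \<subseteq> {..<N}" unfolding D0_def by (blast dest: finite_nat_bounded)
  then show "\<exists>N. \<forall>n\<ge>N. x n = 0" by (auto simp: subset_eq not_less[symmetric])
next
  assume "\<exists>N. \<forall>n\<ge>N. x n = 0"
  then obtain N where "{n. x n \<noteq> 0} \<subseteq> {..<N}" by (auto simp: subset_eq not_le[symmetric])
  then have "finite {n. x n \<noteq> 0}" by (rule finite_subset) simp
  then show "x \<in> D0" by (simp add: D0_def)
qed

lemma D0_lincomb:
  assumes "x \<in> D0" "y \<in> D0"
  shows "(\<lambda>n. a * x n + b * y n) \<in> D0"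
proof -
  obtain N M where "\<forall>n\<ge>N. x n = 0" "\<forall>n\<ge>M. y n = 0"
    using assms unfolding D0_iff_eventually_zero by blast
  then show ?thesis unfolding D0_iff_eventually_zero by (intro exI[of _ "max N M"]) auto
qed

lemma unit_vector_D0: "(\<lambda>m. if m = n then 1 else 0) \<in> D0"
  by (simp add: D0_def)

lemma l2_inner_unit_vector: "l2_inner x (\<lambda>m. if m = n then 1 else 0) = cnj (x n)"
  unfolding l2_inner_def by (subst suminf_finite[of "{n}"]) auto

section \<open>Ladder operators\<close>

lemma funpow_closed: "(\<And>x. x \<in> A \<Longrightarrow> g x \<in> A) \<Longrightarrow> x \<in> A \<Longrightarrow> (g ^^ n) x \<in> A"
  by (induction n) auto

lemma cre_D0:
  assumes "x \<in> D0"
  shows "cre x \<in> D0"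
proof -
  obtain N where "\<forall>n\<ge>N. x n = 0" using assms unfolding D0_iff_eventually_zero by blast
  then show ?thesis unfolding D0_iff_eventually_zero cre_def by (intro exI[of _ "Suc N"]) auto
qed

lemma ann_D0:
  assumes "x \<in> D0"
  shows "ann x \<in> D0"
proof -
  obtain N where "\<forall>n\<ge>N. x n = 0" using assms unfolding D0_iff_eventually_zero by blast
  then show ?thesis unfolding D0_iff_eventually_zero ann_def by (intro exI[of _ N]) auto
qed

lemma numfun_D0: "x \<in> D0 \<Longrightarrow> numfun f x \<in> D0"
  unfolding D0_iff_eventually_zero numfun_def by auto

lemma opA_D0: "x \<in> D0 \<Longrightarrow> opA k l \<xi> f x \<in> D0"
  unfolding opA_def
  by (intro D0_lincomb[where a = 1 and b = 1, simplified] D0_lincomb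
        funpow_closed[where A = D0] cre_D0 ann_D0 numfun_D0)

lemma cre_lincomb: "cre (\<lambda>n. a * x n + b * y n) = (\<lambda>n. a * cre x n + b * cre y n)"
  by (simp add: cre_def fun_eq_iff algebra_simps)

lemma ann_lincomb: "ann (\<lambda>n. a * x n + b * y n) = (\<lambda>n. a * ann x n + b * ann y n)"
  by (simp add: ann_def fun_eq_iff algebra_simps)

lemma numfun_lincomb:
  "numfun f (\<lambda>n. a * x n + b * y n) = (\<lambda>n. a * numfun f x n + b * numfun f y n)"
  by (simp add: numfun_def fun_eq_iff algebra_simps)

lemma cre_scale: "cre (\<lambda>n. c * x n) = (\<lambda>n. c * cre x n)"
  by (simp add: cre_def fun_eq_iff)

lemma ann_scale: "ann (\<lambda>n. c * x n) = (\<lambda>n. c * ann x n)"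
  by (simp add: ann_def fun_eq_iff)

lemma cre_pow_scale: "(cre ^^ N) (\<lambda>n. c * x n) = (\<lambda>n. c * (cre ^^ N) x n)"
  by (induction N) (simp_all add: cre_scale)

lemma funpow_lincomb:
  fixes g :: "('a \<Rightarrow> 'b::comm_ring_1) \<Rightarrow> 'a \<Rightarrow> 'b"
  assumes "\<And>a b x y. g (\<lambda>n. a * x n + b * y n) = (\<lambda>n. a * g x n + b * g y n)"
  shows "(g ^^ N) (\<lambda>n. a * x n + b * y n) = (\<lambda>n. a * (g ^^ N) x n + b * (g ^^ N) y n)"
  by (induction N) (simp_all add: assms)

lemma opA_lincomb:
  "opA k l \<xi> f (\<lambda>n. a * x n + b * y n) = (\<lambda>n. a * opA k l \<xi> f x n + b * opA k l \<xi> f y n)"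
  by (simp add: opA_def funpow_lincomb[OF cre_lincomb] funpow_lincomb[OF ann_lincomb]
      numfun_lincomb fun_eq_iff algebra_simps)

lemma l2_inner_cre:
  assumes "y \<in> D0"
  shows "l2_inner (cre x) y = l2_inner x (ann y)"
proof -
  have "summable (\<lambda>m. cnj (cre x m) * y m)"
    using inner_summable_D0_right[OF assms] by (simp add: inner_summable_def)
  from suminf_split_head[OF this] show ?thesis
    by (simp add: l2_inner_def cre_def ann_def mult_ac)
qed

lemma l2_inner_ann:
  assumes "y \<in> D0"
  shows "l2_inner (ann x) y = l2_inner x (cre y)"
proof -
  have "summable (\<lambda>m. cnj (x m) * cre y m)"
    using inner_summable_D0_right[OF cre_D0[OF assms]] by (simp add: inner_summable_def)
  from suminf_split_head[OF this] show ?thesis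
    by (simp add: l2_inner_def cre_def ann_def mult_ac)
qed

lemma l2_inner_cre_pow:
  assumes "y \<in> D0"
  shows "l2_inner ((cre ^^ n) x) y = l2_inner x ((ann ^^ n) y)"
proof (induction n arbitrary: x)
  case (Suc n)
  have "l2_inner ((cre ^^ Suc n) x) y = l2_inner (cre x) ((ann ^^ n) y)"
    by (simp add: funpow_Suc_right Suc del: funpow.simps(2))
  also have "\<dots> = l2_inner x ((ann ^^ Suc n) y)"
    using funpow_closed[where A = D0, OF ann_D0 assms] by (simp add: l2_inner_cre)
  finally show ?case .
qed simp

lemma l2_inner_ann_pow:
  assumes "y \<in> D0"
  shows "l2_inner ((ann ^^ n) x) y = l2_inner x ((cre ^^ n) y)"
proof (induction n arbitrary: x)
  case (Suc n)
  have "l2_inner ((ann ^^ Suc n) x) y = l2_inner (ann x) ((cre ^^ n) y)"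
    by (simp add: funpow_Suc_right Suc del: funpow.simps(2))
  also have "\<dots> = l2_inner x ((cre ^^ Suc n) y)"
    using funpow_closed[where A = D0, OF cre_D0 assms] by (simp add: l2_inner_ann)
  finally show ?case .
qed simp

lemma l2_inner_numfun: "l2_inner (numfun f x) y = l2_inner x (numfun f y)"
  unfolding l2_inner_def numfun_def by (simp add: algebra_simps)

lemma l2_inner_opA:
  assumes "\<phi> \<in> D0"
  shows "l2_inner (opA k l \<xi> f \<psi>) \<phi> = l2_inner \<psi> (opA k l \<xi> f \<phi>)"
proof -
  let ?P = "\<lambda>x. (cre ^^ k) ((ann ^^ l) x)" and ?Q = "\<lambda>x. (cre ^^ l) ((ann ^^ k) x)"
  have adjoint: "l2_inner (?P x) y = l2_inner x (?Q y)" "l2_inner (?Q x) y = l2_inner x (?P y)"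
    if "y \<in> D0" for x y
    using funpow_closed[where A = D0, OF ann_D0 that]
    by (simp_all add: l2_inner_cre_pow l2_inner_ann_pow that)
  have "?P \<phi> \<in> D0" "?Q \<phi> \<in> D0" "numfun f \<phi> \<in> D0"
    using assms by (auto intro!: funpow_closed[where A = D0] cre_D0 ann_D0 numfun_D0)
  then have "(\<lambda>n. \<xi> * (cnj (\<psi> n) * ?P \<phi> n) + cnj \<xi> * (cnj (\<psi> n) * ?Q \<phi> n)
        + cnj (\<psi> n) * numfun f \<phi> n)
      sums (\<xi> * l2_inner \<psi> (?P \<phi>) + cnj \<xi> * l2_inner \<psi> (?Q \<phi>) + l2_inner \<psi> (numfun f \<phi>))"
    by (intro sums_add sums_mult l2_inner_sums inner_summable_D0_right)
  then have "l2_inner \<psi> (opA k l \<xi> f \<phi>)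
      = \<xi> * l2_inner \<psi> (?P \<phi>) + cnj \<xi> * l2_inner \<psi> (?Q \<phi>) + l2_inner \<psi> (numfun f \<phi>)"
    by (intro l2_inner_eqI) (simp add: opA_def algebra_simps)
  moreover have "(\<lambda>n. cnj \<xi> * (cnj (?P \<psi> n) * \<phi> n) + \<xi> * (cnj (?Q \<psi> n) * \<phi> n)
        + cnj (numfun f \<psi> n) * \<phi> n)
      sums (cnj \<xi> * l2_inner (?P \<psi>) \<phi> + \<xi> * l2_inner (?Q \<psi>) \<phi> + l2_inner (numfun f \<psi>) \<phi>)"
    using assms by (intro sums_add sums_mult l2_inner_sums inner_summable_D0_right)
  then have "l2_inner (opA k l \<xi> f \<psi>) \<phi>
      = cnj \<xi> * l2_inner (?P \<psi>) \<phi> + \<xi> * l2_inner (?Q \<psi>) \<phi> + l2_inner (numfun f \<psi>) \<phi>"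
    by (intro l2_inner_eqI) (simp add: opA_def algebra_simps)
  ultimately show ?thesis
    using assms by (simp add: adjoint l2_inner_numfun)
qed

section \<open>A conjugation commuting with the operator\<close>

definition conjugation :: "complex \<Rightarrow> (nat \<Rightarrow> complex) \<Rightarrow> nat \<Rightarrow> complex" where
  "conjugation u x = (\<lambda>m. u ^ m * cnj (x m))"

lemma unimodular_cnj_mult: "cmod u = 1 \<Longrightarrow> cnj u * u = 1"
  using complex_norm_square[of u] by (simp add: mult.commute)

lemma conjugation_conjugation:
  assumes "cmod u = 1"
  shows "conjugation u (conjugation u x) = x"
proof -
  have "conjugation u (conjugation u x) m = (cnj u * u) ^ m * x m" for m
    by (simp add: conjugation_def power_mult_distrib algebra_simps)
  then show ?thesis using unimodular_cnj_mult[OF assms] by auto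
qed

lemma l2_inner_conjugation:
  assumes "cmod u = 1"
  shows "l2_inner (conjugation u x) (conjugation u y) = l2_inner y x"
proof -
  have "cnj (conjugation u x m) * conjugation u y m = (cnj u * u) ^ m * (cnj (y m) * x m)" for m
    by (simp add: conjugation_def power_mult_distrib algebra_simps)
  then show ?thesis unfolding l2_inner_def using unimodular_cnj_mult[OF assms] by simp
qed

lemma conjugation_l2: "cmod u = 1 \<Longrightarrow> x \<in> l2 \<Longrightarrow> conjugation u x \<in> l2"
  by (simp add: conjugation_def l2_def norm_mult norm_power)

lemma conjugation_D0: "cmod u = 1 \<Longrightarrow> x \<in> D0 \<Longrightarrow> conjugation u x \<in> D0"
  by (auto simp: conjugation_def D0_def)

lemma conjugation_lincomb:
  "conjugation u (\<lambda>n. a * x n + b * y n)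
     = (\<lambda>n. cnj a * conjugation u x n + cnj b * conjugation u y n)"
  by (simp add: conjugation_def fun_eq_iff algebra_simps)

lemma conjugation_real_part:
  assumes "cmod u = 1"
  shows "conjugation u (\<lambda>n. a * x n + cnj a * conjugation u x n) = (\<lambda>n. a * x n + cnj a * conjugation u x n)"
  by (simp add: conjugation_lincomb conjugation_conjugation[OF assms] add.commute)

lemma conjugation_cre: "conjugation u (cre x) = (\<lambda>m. u * cre (conjugation u x) m)"
  by (auto simp: conjugation_def cre_def fun_eq_iff gr0_conv_Suc)

lemma conjugation_ann:
  assumes "cmod u = 1"
  shows "conjugation u (ann x) = (\<lambda>m. cnj u * ann (conjugation u x) m)"
proof -
  have "cnj u * ann (conjugation u x) m = (cnj u * u) * conjugation u (ann x) m" for m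
    by (simp add: conjugation_def ann_def)
  then show ?thesis using unimodular_cnj_mult[OF assms] by simp
qed

lemma conjugation_cre_pow:
  "conjugation u ((cre ^^ N) x) = (\<lambda>m. u ^ N * (cre ^^ N) (conjugation u x) m)"
  by (induction N) (simp_all add: conjugation_cre cre_scale mult.assoc)

lemma conjugation_ann_pow:
  "cmod u = 1 \<Longrightarrow> conjugation u ((ann ^^ N) x) = (\<lambda>m. cnj u ^ N * (ann ^^ N) (conjugation u x) m)"
  by (induction N) (simp_all add: conjugation_ann ann_scale mult.assoc)

lemma conjugation_numfun: "conjugation u (numfun f x) = numfun f (conjugation u x)"
  by (simp add: conjugation_def numfun_def fun_eq_iff)

lemma conjugation_opA:
  assumes u: "cmod u = 1" and "l \<le> k" and root: "cnj \<xi> * u ^ (k - l) = \<xi>"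
  shows "conjugation u (opA k l \<xi> f x) = opA k l \<xi> f (conjugation u x)"
proof -
  let ?P = "\<lambda>x. (cre ^^ k) ((ann ^^ l) x)" and ?Q = "\<lambda>x. (cre ^^ l) ((ann ^^ k) x)"
  have "u ^ l * cnj u ^ l = 1"
    using unimodular_cnj_mult[OF u] by (metis mult.commute power_mult_distrib power_one)
  moreover have "u ^ k = u ^ (k - l) * u ^ l"
    using \<open>l \<le> k\<close> by (simp flip: power_add)
  ultimately have coeff_P: "cnj \<xi> * (u ^ k * cnj u ^ l) = \<xi>"
    using root by (metis mult.assoc mult.right_neutral)
  then have coeff_Q: "\<xi> * (u ^ l * cnj u ^ k) = cnj \<xi>"
    by (metis complex_cnj_cnj complex_cnj_mult complex_cnj_power mult.commute)
  have "conjugation u (opA k l \<xi> f x) = (\<lambda>m. cnj \<xi> * conjugation u (?P x) m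
      + \<xi> * conjugation u (?Q x) m + conjugation u (numfun f x) m)"
    by (simp add: conjugation_def opA_def fun_eq_iff algebra_simps)
  also have "\<dots> = (\<lambda>m. (cnj \<xi> * (u ^ k * cnj u ^ l)) * ?P (conjugation u x) m
      + (\<xi> * (u ^ l * cnj u ^ k)) * ?Q (conjugation u x) m + numfun f (conjugation u x) m)"
    by (simp add: conjugation_cre_pow conjugation_ann_pow[OF u] cre_pow_scale
        conjugation_numfun mult.assoc)
  also have "\<dots> = opA k l \<xi> f (conjugation u x)"
    by (simp add: coeff_P coeff_Q opA_def)
  finally show ?thesis .
qed

lemma unimodular_root_exists:
  assumes "0 < n"
  shows "\<exists>u. cmod u = 1 \<and> cnj \<xi> * u ^ n = \<xi>"
proof -
  define u where "u = cis (2 * Arg \<xi> / real n)"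
  have "u ^ n = cis (2 * Arg \<xi>)"
    unfolding u_def Complex.DeMoivre using assms by simp
  moreover have \<xi>: "\<xi> = complex_of_real (cmod \<xi>) * cis (Arg \<xi>)"
    using rcis_cmod_Arg[of \<xi>] by (simp add: rcis_def)
  ultimately have "cnj \<xi> * u ^ n = complex_of_real (cmod \<xi>) * (cis (- Arg \<xi>) * cis (2 * Arg \<xi>))"
    by (metis cis_cnj complex_cnj_complex_of_real complex_cnj_mult mult.assoc)
  also have "\<dots> = \<xi>"
    by (subst \<xi>) (simp add: cis_mult)
  finally show ?thesis by (intro exI[of _ u]) (simp add: u_def)
qed

section \<open>Orthonormal bases\<close>

definition orthonormal :: "(nat \<Rightarrow> complex) set \<Rightarrow> bool" where
  "orthonormal B \<longleftrightarrow> (\<forall>b\<in>B. \<forall>b'\<in>B. l2_inner b b' = (if b = b' then 1 else 0))"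

lemma orthonormal_insert_normalized:
  assumes "B \<subseteq> l2" "orthonormal B" "\<psi> \<in> l2" "\<psi> \<noteq> (\<lambda>_. 0)" "\<forall>b\<in>B. l2_inner b \<psi> = 0"
  obtains c where "(\<lambda>n. c * \<psi> n) \<notin> B" "orthonormal (insert (\<lambda>n. c * \<psi> n) B)"
proof -
  obtain r where "r > 0" and r: "l2_inner \<psi> \<psi> = complex_of_real r"
    using l2_inner_self_pos assms(3,4) by blast
  define c where "c = complex_of_real (1 / sqrt r)"
  have summable: "inner_summable \<psi> \<psi>" "\<And>b. b \<in> B \<Longrightarrow> inner_summable b \<psi>"
    using assms(1,3) by (auto intro: inner_summable_l2)
  have scaled: "(\<lambda>n. c * \<psi> n) \<in> l2" using l2_lincomb[OF assms(3) assms(3), of c 0] by simp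
  then have "l2_inner (\<lambda>n. c * \<psi> n) (\<lambda>n. c * \<psi> n) = cnj c * (c * l2_inner \<psi> \<psi>)"
    using assms(3) by (simp add: l2_inner_scale_left l2_inner_scale_right inner_summable_l2)
  also have "\<dots> = 1"
    using \<open>r > 0\<close> by (simp add: r c_def flip: of_real_mult)
  finally have "l2_inner (\<lambda>n. c * \<psi> n) (\<lambda>n. c * \<psi> n) = 1" .
  moreover have "l2_inner b (\<lambda>n. c * \<psi> n) = 0" "l2_inner (\<lambda>n. c * \<psi> n) b = 0" if "b \<in> B" for b
  proof -
    show "l2_inner b (\<lambda>n. c * \<psi> n) = 0"
      using summable(2)[OF that] assms(5) that by (simp add: l2_inner_scale_right)
    moreover have "inner_summable b (\<lambda>n. c * \<psi> n)"
      using scaled that assms(1) by (auto intro: inner_summable_l2)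
    ultimately show "l2_inner (\<lambda>n. c * \<psi> n) b = 0" by (simp add: l2_inner_commute)
  qed
  ultimately show ?thesis
    using assms(2) by (intro that[of c]) (force, auto simp: orthonormal_def)
qed

lemma is_onb_exists:
  assumes "M \<subseteq> l2" and scale: "\<And>x a. x \<in> M \<Longrightarrow> (\<lambda>n. a * x n) \<in> M"
  shows "\<exists>B. is_onb M B"
proof -
  define \<A> where "\<A> = {B. B \<subseteq> M \<and> orthonormal B}"
  have "\<Union>C \<in> \<A>" if chain: "subset.chain \<A> C" for C
    unfolding \<A>_def orthonormal_def
  proof (intro CollectI conjI ballI)
    show "\<Union>C \<subseteq> M" using chain by (auto simp: subset_chain_def \<A>_def)
  next
    fix b b' assume "b \<in> \<Union>C" "b' \<in> \<Union>C"
    then obtain X where "X \<in> C" "b \<in> X" "b' \<in> X"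
      using chain unfolding subset_chain_def by blast
    then show "l2_inner b b' = (if b = b' then 1 else 0)"
      using chain by (auto simp: subset_chain_def \<A>_def orthonormal_def)
  qed
  then obtain B where "B \<in> \<A>" and maximal: "\<And>X. X \<in> \<A> \<Longrightarrow> B \<subseteq> X \<Longrightarrow> X = B"
    using subset_Zorn'[of \<A>] by blast
  have "\<psi> = (\<lambda>_. 0)" if "\<psi> \<in> M" and orthogonal: "\<forall>b\<in>B. l2_inner b \<psi> = 0" for \<psi>
  proof (rule ccontr)
    assume "\<psi> \<noteq> (\<lambda>_. 0)"
    moreover have "B \<subseteq> l2" "\<psi> \<in> l2" "orthonormal B"
      using \<open>B \<in> \<A>\<close> \<open>\<psi> \<in> M\<close> assms(1) by (auto simp: \<A>_def)
    ultimately obtain c where "(\<lambda>n. c * \<psi> n) \<notin> B" "orthonormal (insert (\<lambda>n. c * \<psi> n) B)"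
      using orthonormal_insert_normalized orthogonal by metis
    moreover have "insert (\<lambda>n. c * \<psi> n) B \<in> \<A>"
      using calculation \<open>B \<in> \<A>\<close> scale[OF \<open>\<psi> \<in> M\<close>] by (simp add: \<A>_def)
    ultimately show False using maximal by blast
  qed
  then have "is_onb M B"
    using \<open>B \<in> \<A>\<close> by (simp add: is_onb_def \<A>_def orthonormal_def)
  then show ?thesis ..
qed

lemma is_onb_conjugation:
  assumes u: "cmod u = 1" and B: "is_onb M B" and "M \<subseteq> l2"
    and MN: "conjugation u ` M \<subseteq> N" and NM: "conjugation u ` N \<subseteq> M"
  shows "is_onb N (conjugation u ` B)"
  unfolding is_onb_def
proof (intro conjI ballI impI)
  show "conjugation u ` B \<subseteq> N" using B MN by (auto simp: is_onb_def)
next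
  fix c c' assume "c \<in> conjugation u ` B" "c' \<in> conjugation u ` B"
  then obtain b b' where "b \<in> B" "b' \<in> B" and c: "c = conjugation u b" "c' = conjugation u b'"
    by blast
  moreover have "b' = b \<longleftrightarrow> c = c'"
    using c conjugation_conjugation[OF u] by metis
  ultimately show "l2_inner c c' = (if c = c' then 1 else 0)"
    using B by (simp add: is_onb_def l2_inner_conjugation[OF u])
next
  fix \<psi> assume "\<psi> \<in> N" and orthogonal: "\<forall>c\<in>conjugation u ` B. l2_inner c \<psi> = 0"
  then have "conjugation u \<psi> \<in> M" using NM by blast
  then have "\<psi> \<in> l2"
    using conjugation_l2[OF u] conjugation_conjugation[OF u] \<open>M \<subseteq> l2\<close> by (metis subsetD)
  have "l2_inner b (conjugation u \<psi>) = 0" if "b \<in> B" for b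
  proof -
    have "conjugation u b \<in> l2" using that B \<open>M \<subseteq> l2\<close> conjugation_l2[OF u] by (auto simp: is_onb_def)
    then have "l2_inner \<psi> (conjugation u b) = cnj (l2_inner (conjugation u b) \<psi>)"
      using \<open>\<psi> \<in> l2\<close> by (intro l2_inner_commute inner_summable_l2)
    then show ?thesis
      using orthogonal that l2_inner_conjugation[OF u, of "conjugation u b" \<psi>]
      by (simp add: conjugation_conjugation[OF u])
  qed
  then have "conjugation u \<psi> = (\<lambda>_. 0)"
    using B \<open>conjugation u \<psi> \<in> M\<close> by (simp add: is_onb_def)
  then show "\<psi> = (\<lambda>_. 0)"
    using conjugation_conjugation[OF u, of \<psi>] by (simp add: conjugation_def)
qed

lemma same_hilbert_dim_conjugation:
  assumes u: "cmod u = 1" and "M \<subseteq> l2" and scale: "\<And>x a. x \<in> M \<Longrightarrow> (\<lambda>n. a * x n) \<in> M"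
    and "conjugation u ` M \<subseteq> N" "conjugation u ` N \<subseteq> M"
  shows "same_hilbert_dim M N"
proof -
  obtain B where B: "is_onb M B" using is_onb_exists[OF assms(2) scale] by blast
  have "inj_on (conjugation u) B"
    by (metis conjugation_conjugation[OF u] inj_on_inverseI)
  then show ?thesis
    using B is_onb_conjugation[OF u B] assms(2,4,5)
    unfolding same_hilbert_dim_def by (blast intro: bij_betw_imageI)
qed

section \<open>Symmetric operators commuting with a conjugation\<close>

text \<open>T is defined on all sequences, as a band matrix is; formal symmetry against D0 then makes
  the adjoint of T on any domain containing D0 act as T itself (\<open>formal_adjoint_unique\<close>).\<close>

locale conj_real_operator =
  fixes T :: "(nat \<Rightarrow> complex) \<Rightarrow> nat \<Rightarrow> complex" and u :: complex
  assumes linear: "T (\<lambda>n. a * x n + b * y n) = (\<lambda>n. a * T x n + b * T y n)"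
    and D0_into_l2: "x \<in> D0 \<Longrightarrow> T x \<in> l2"
    and formally_symmetric: "\<phi> \<in> D0 \<Longrightarrow> l2_inner (T \<psi>) \<phi> = l2_inner \<psi> (T \<phi>)"
    and unimodular: "cmod u = 1"
    and commutes_conjugation: "conjugation u (T x) = T (conjugation u x)"
begin

lemma range_vector_l2: "\<phi> \<in> D0 \<Longrightarrow> (\<lambda>m. T \<phi> m + c * \<phi> m) \<in> l2"
  using l2_lincomb[OF D0_into_l2 subsetD[OF D0_subset_l2], of \<phi> \<phi> 1 c] by simp

lemma defect_space_scale:
  assumes "\<psi> \<in> defect_space T c"
  shows "(\<lambda>n. a * \<psi> n) \<in> defect_space T c"
proof -
  have "\<psi> \<in> l2" using assms by (simp add: defect_space_def)
  then have "inner_summable \<psi> (\<lambda>m. T \<phi> m + c * \<phi> m)" if "\<phi> \<in> D0" for \<phi>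
    using range_vector_l2[OF that] by (rule inner_summable_l2)
  then show ?thesis
    using assms \<open>\<psi> \<in> l2\<close> l2_lincomb[of \<psi> \<psi> a 0]
    by (simp add: defect_space_def l2_inner_scale_left)
qed

lemma conjugation_defect_space:
  assumes "\<psi> \<in> defect_space T c"
  shows "conjugation u \<psi> \<in> defect_space T (cnj c)"
proof -
  have "\<psi> \<in> l2" using assms by (simp add: defect_space_def)
  have "l2_inner (conjugation u \<psi>) (\<lambda>m. T \<phi> m + cnj c * \<phi> m) = 0" if "\<phi> \<in> D0" for \<phi>
  proof -
    define w where "w = (\<lambda>m. T \<phi> m + cnj c * \<phi> m)"
    have w: "conjugation u w = (\<lambda>m. T (conjugation u \<phi>) m + c * conjugation u \<phi> m)"
      using conjugation_lincomb[of u 1 "T \<phi>" "cnj c" \<phi>] by (simp add: w_def commutes_conjugation)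
    have "conjugation u \<phi> \<in> D0" using conjugation_D0[OF unimodular that] .
    then have "l2_inner \<psi> (conjugation u w) = 0" and "inner_summable \<psi> (conjugation u w)"
      using assms \<open>\<psi> \<in> l2\<close> by (auto simp: w defect_space_def intro: inner_summable_l2 range_vector_l2)
    moreover have "l2_inner (conjugation u \<psi>) w = l2_inner (conjugation u w) \<psi>"
      using l2_inner_conjugation[OF unimodular, of \<psi> "conjugation u w"]
      by (simp add: conjugation_conjugation[OF unimodular])
    ultimately show ?thesis by (simp add: l2_inner_commute w_def)
  qed
  then show ?thesis
    using \<open>\<psi> \<in> l2\<close> by (simp add: defect_space_def conjugation_l2[OF unimodular])
qed

theorem same_hilbert_dim_defect_spaces:
  "same_hilbert_dim (defect_space T c) (defect_space T (cnj c))"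
  using conjugation_defect_space[of _ c] conjugation_defect_space[of _ "cnj c"]
  by (intro same_hilbert_dim_conjugation[OF unimodular] defect_space_scale)
     (auto simp: defect_space_def)

definition dom_max :: "(nat \<Rightarrow> complex) set" where
  "dom_max = {x \<in> l2. T x \<in> l2}"

definition symmetric_pair :: "(nat \<Rightarrow> complex) \<Rightarrow> (nat \<Rightarrow> complex) \<Rightarrow> bool" where
  "symmetric_pair x y \<longleftrightarrow> l2_inner x (T y) = l2_inner (T x) y"

lemma D0_subset_dom_max: "D0 \<subseteq> dom_max"
  using D0_subset_l2 D0_into_l2 by (auto simp: dom_max_def)

lemma dom_max_lincomb: "x \<in> dom_max \<Longrightarrow> y \<in> dom_max \<Longrightarrow> (\<lambda>n. a * x n + b * y n) \<in> dom_max"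
  by (simp add: dom_max_def linear l2_lincomb)

lemma conjugation_dom_max: "x \<in> dom_max \<Longrightarrow> conjugation u x \<in> dom_max"
  by (simp add: dom_max_def conjugation_l2[OF unimodular] flip: commutes_conjugation)

lemma symmetric_pair_D0: "y \<in> D0 \<Longrightarrow> symmetric_pair x y"
  by (simp add: symmetric_pair_def formally_symmetric)

lemma symmetric_pair_commute:
  assumes "x \<in> dom_max" "y \<in> dom_max" "symmetric_pair x y"
  shows "symmetric_pair y x"
proof -
  have "l2_inner y (T x) = cnj (l2_inner (T x) y)"
    using assms(1,2) by (intro l2_inner_commute inner_summable_l2) (auto simp: dom_max_def)
  also have "\<dots> = cnj (l2_inner x (T y))" using assms(3) by (simp add: symmetric_pair_def)
  also have "\<dots> = l2_inner (T y) x"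
    using assms(1,2) by (intro l2_inner_commute[symmetric] inner_summable_l2) (auto simp: dom_max_def)
  finally show ?thesis by (simp add: symmetric_pair_def)
qed

lemma symmetric_pair_lincomb_left:
  assumes "x \<in> dom_max" "y \<in> dom_max" "z \<in> dom_max" "symmetric_pair x z" "symmetric_pair y z"
  shows "symmetric_pair (\<lambda>n. a * x n + b * y n) z"
  using assms
  by (simp add: symmetric_pair_def dom_max_def linear l2_inner_lincomb_left inner_summable_l2)

lemma symmetric_pair_lincomb_right:
  assumes "x \<in> dom_max" "y \<in> dom_max" "z \<in> dom_max" "symmetric_pair z x" "symmetric_pair z y"
  shows "symmetric_pair z (\<lambda>n. a * x n + b * y n)"
proof -
  have "symmetric_pair (\<lambda>n. a * x n + b * y n) z"
    using assms symmetric_pair_commute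
    by (intro symmetric_pair_lincomb_left) auto
  then show ?thesis
    using assms(1-3) dom_max_lincomb symmetric_pair_commute by blast
qed

lemma symmetric_pair_conjugation:
  "symmetric_pair x y \<Longrightarrow> symmetric_pair (conjugation u y) (conjugation u x)"
  by (simp add: symmetric_pair_def l2_inner_conjugation[OF unimodular] flip: commutes_conjugation)

lemma symmetric_pair_real: "conjugation u h = h \<Longrightarrow> symmetric_pair h h"
  using l2_inner_conjugation[OF unimodular, of h "T h"]
  by (simp add: symmetric_pair_def commutes_conjugation)

definition real_symmetric_domain :: "(nat \<Rightarrow> complex) set \<Rightarrow> bool" where
  "real_symmetric_domain D \<longleftrightarrow> D0 \<subseteq> D \<and> D \<subseteq> dom_max
     \<and> (\<forall>x\<in>D. \<forall>y\<in>D. \<forall>c. (\<lambda>n. x n + c * y n) \<in> D)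
     \<and> (\<forall>x\<in>D. conjugation u x \<in> D)
     \<and> (\<forall>x\<in>D. \<forall>y\<in>D. symmetric_pair x y)"

lemma real_symmetric_domain_D0: "real_symmetric_domain D0"
  using D0_lincomb[of _ _ 1] D0_subset_dom_max conjugation_D0[OF unimodular] symmetric_pair_D0
  by (auto simp: real_symmetric_domain_def)

lemma real_symmetric_domain_chain_Union:
  assumes "C \<noteq> {}" and chain: "subset.chain (Collect real_symmetric_domain) C"
  shows "real_symmetric_domain (\<Union>C)"
proof -
  have common: "\<exists>Z\<in>C. x \<in> Z \<and> y \<in> Z" if "x \<in> \<Union>C" "y \<in> \<Union>C" for x y
    using that chain unfolding subset_chain_def by blast
  have D0: "\<And>Z. Z \<in> C \<Longrightarrow> D0 \<subseteq> Z" and dom: "\<And>Z. Z \<in> C \<Longrightarrow> Z \<subseteq> dom_max"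
    and conj: "\<And>Z. Z \<in> C \<Longrightarrow> \<forall>x\<in>Z. conjugation u x \<in> Z"
    and lincomb: "\<And>Z. Z \<in> C \<Longrightarrow> \<forall>x\<in>Z. \<forall>y\<in>Z. \<forall>c. (\<lambda>n. x n + c * y n) \<in> Z"
    and symmetric: "\<And>Z. Z \<in> C \<Longrightarrow> \<forall>x\<in>Z. \<forall>y\<in>Z. symmetric_pair x y"
    using chain by (auto simp: subset_chain_def real_symmetric_domain_def subset_eq)
  have "D0 \<subseteq> \<Union>C" "\<Union>C \<subseteq> dom_max" "\<forall>x\<in>\<Union>C. conjugation u x \<in> \<Union>C"
    using \<open>C \<noteq> {}\<close> D0 dom conj by blast+
  moreover have "(\<lambda>n. x n + c * y n) \<in> \<Union>C" "symmetric_pair x y"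
    if "x \<in> \<Union>C" "y \<in> \<Union>C" for x y c
    using common[OF that] lincomb symmetric by blast+
  ultimately show ?thesis by (simp add: real_symmetric_domain_def)
qed

lemma maximal_real_symmetric_domain_exists:
  "\<exists>D. real_symmetric_domain D \<and> (\<forall>D'. real_symmetric_domain D' \<longrightarrow> D \<subseteq> D' \<longrightarrow> D' = D)"
  using subset_Zorn_nonempty[of "Collect real_symmetric_domain"]
    real_symmetric_domain_D0 real_symmetric_domain_chain_Union
  by blast

lemma real_symmetric_domain_extend:
  assumes D: "real_symmetric_domain D" and h: "h \<in> dom_max" "conjugation u h = h"
    and symmetric: "\<forall>x\<in>D. symmetric_pair x h"
  shows "real_symmetric_domain {\<lambda>n. x n + c * h n | x c. x \<in> D}" (is "real_symmetric_domain ?D'")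
proof -
  have D_dom: "D \<subseteq> dom_max" and D_conj: "\<And>x. x \<in> D \<Longrightarrow> conjugation u x \<in> D"
    and D_lincomb: "\<And>x y c. x \<in> D \<Longrightarrow> y \<in> D \<Longrightarrow> (\<lambda>n. x n + c * y n) \<in> D"
    and D_symmetric: "\<And>x y. x \<in> D \<Longrightarrow> y \<in> D \<Longrightarrow> symmetric_pair x y"
    using D by (auto simp: real_symmetric_domain_def)
  have extended: "(\<lambda>n. x n + c * h n) \<in> ?D'" if "x \<in> D" for x c
    using that by blast
  have "D0 \<subseteq> ?D'"
    using extended[of _ 0] D by (auto simp: real_symmetric_domain_def)
  moreover have "?D' \<subseteq> dom_max"
    using D_dom dom_max_lincomb[OF _ h(1), of _ 1] by auto
  moreover have "(\<lambda>n. w n + e * v n) \<in> ?D'" if w: "w \<in> ?D'" and v: "v \<in> ?D'" for w v e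
  proof -
    obtain x c y d where "x \<in> D" "y \<in> D" "w = (\<lambda>n. x n + c * h n)" "v = (\<lambda>n. y n + d * h n)"
      using w v by blast
    moreover have "(\<lambda>n. w n + e * v n) = (\<lambda>n. (\<lambda>n. x n + e * y n) n + (c + e * d) * h n)"
      using calculation by (simp add: fun_eq_iff algebra_simps)
    ultimately show ?thesis using extended D_lincomb by presburger
  qed
  moreover have "conjugation u w \<in> ?D'" if w: "w \<in> ?D'" for w
  proof -
    obtain x c where "x \<in> D" "w = (\<lambda>n. x n + c * h n)" using w by blast
    moreover have "conjugation u (\<lambda>n. x n + c * h n) = (\<lambda>n. conjugation u x n + cnj c * h n)"
      using conjugation_lincomb[of u 1 x c h] h(2) by simp
    ultimately show ?thesis using extended D_conj by presburger
  qed
  moreover have "symmetric_pair w v" if w: "w \<in> ?D'" and v: "v \<in> ?D'" for w v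
  proof -
    obtain x c y d where "x \<in> D" "y \<in> D" and wv: "w = (\<lambda>n. x n + c * h n)" "v = (\<lambda>n. y n + d * h n)"
      using w v by blast
    then have dom: "x \<in> dom_max" "y \<in> dom_max" "v \<in> dom_max"
      using D_dom dom_max_lincomb[OF _ h(1), of y 1 d] by auto
    have "symmetric_pair h y"
      using symmetric_pair_commute symmetric \<open>y \<in> D\<close> h(1) dom by blast
    then have "symmetric_pair h v" "symmetric_pair x v"
      using symmetric_pair_lincomb_right[OF dom(2) h(1), of _ 1 d] symmetric_pair_real[OF h(2)]
        D_symmetric symmetric \<open>x \<in> D\<close> \<open>y \<in> D\<close> dom h(1) wv(2)
      by simp_all
    then show ?thesis
      using symmetric_pair_lincomb_left[OF dom(1) h(1) dom(3), of 1 c] wv(1) by simp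
  qed
  ultimately show ?thesis by (simp add: real_symmetric_domain_def)
qed

lemma maximal_real_symmetric_domain_real:
  assumes D: "real_symmetric_domain D"
    and maximal: "\<And>D'. real_symmetric_domain D' \<Longrightarrow> D \<subseteq> D' \<Longrightarrow> D' = D"
    and h: "h \<in> dom_max" "\<forall>x\<in>D. symmetric_pair x h" "conjugation u h = h"
  shows "h \<in> D"
proof -
  let ?D' = "{\<lambda>n. x n + c * h n | x c. x \<in> D}"
  have "real_symmetric_domain ?D'"
    using h by (intro real_symmetric_domain_extend[OF D]) auto
  moreover have "D \<subseteq> ?D'"
    by (force intro: exI[of _ 0])
  moreover have "(\<lambda>_. 0) \<in> D"
    using D by (auto simp: real_symmetric_domain_def D0_def)
  then have "h \<in> ?D'"
    by (force intro: exI[of _ 1])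
  ultimately show ?thesis using maximal by blast
qed

lemma maximal_real_symmetric_domain_adjoint:
  assumes D: "real_symmetric_domain D"
    and maximal: "\<And>D'. real_symmetric_domain D' \<Longrightarrow> D \<subseteq> D' \<Longrightarrow> D' = D"
    and "\<psi> \<in> dom_max" "\<forall>x\<in>D. symmetric_pair x \<psi>"
  shows "\<psi> \<in> D"
proof -
  let ?adjoint = "{\<phi> \<in> dom_max. \<forall>x\<in>D. symmetric_pair x \<phi>}"
  have D_dom: "D \<subseteq> dom_max" and D_conj: "\<And>x. x \<in> D \<Longrightarrow> conjugation u x \<in> D"
    and D_lincomb: "\<And>x y c. x \<in> D \<Longrightarrow> y \<in> D \<Longrightarrow> (\<lambda>n. x n + c * y n) \<in> D"
    using D by (auto simp: real_symmetric_domain_def)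
  have conjugation_adjoint: "conjugation u \<phi> \<in> ?adjoint" if "\<phi> \<in> ?adjoint" for \<phi>
  proof -
    have "symmetric_pair (conjugation u \<phi>) x" if "x \<in> D" for x
      using symmetric_pair_conjugation[of "conjugation u x" \<phi>] \<open>\<phi> \<in> ?adjoint\<close> D_conj[OF that]
      by (simp add: conjugation_conjugation[OF unimodular])
    then show ?thesis
      using that D_dom conjugation_dom_max symmetric_pair_commute by blast
  qed
  have lincomb_adjoint: "(\<lambda>n. a * \<phi> n + b * \<phi>' n) \<in> ?adjoint"
    if "\<phi> \<in> ?adjoint" "\<phi>' \<in> ?adjoint" for \<phi> \<phi>' a b
    using that D_dom by (auto intro: dom_max_lincomb symmetric_pair_lincomb_right)
  define re where "re = (\<lambda>n. (1/2) * \<psi> n + cnj (1/2) * conjugation u \<psi> n)"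
  define im where "im = (\<lambda>n. (- \<i>/2) * \<psi> n + cnj (- \<i>/2) * conjugation u \<psi> n)"
  have "re \<in> ?adjoint" "im \<in> ?adjoint"
    unfolding re_def im_def using assms(3,4) by (intro lincomb_adjoint conjugation_adjoint; simp)+
  moreover have "conjugation u re = re" "conjugation u im = im"
    unfolding re_def im_def by (rule conjugation_real_part[OF unimodular])+
  ultimately have "re \<in> D" "im \<in> D"
    using maximal_real_symmetric_domain_real[OF D maximal] by auto
  moreover have "\<psi> = (\<lambda>n. re n + \<i> * im n)"
    by (simp add: re_def im_def fun_eq_iff field_simps)
  ultimately show ?thesis using D_lincomb by metis
qed

lemma formal_adjoint_unique:
  assumes "\<And>\<phi>. \<phi> \<in> D0 \<Longrightarrow> l2_inner \<psi> (T \<phi>) = l2_inner \<eta> \<phi>"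
  shows "\<eta> = T \<psi>"
proof
  fix n :: nat
  let ?e = "\<lambda>m. if m = n then 1 else 0 :: complex"
  have "cnj (\<eta> n) = l2_inner \<eta> ?e" by (simp add: l2_inner_unit_vector)
  also have "\<dots> = l2_inner \<psi> (T ?e)" using assms[OF unit_vector_D0] by simp
  also have "\<dots> = l2_inner (T \<psi>) ?e" using formally_symmetric[OF unit_vector_D0] by simp
  also have "\<dots> = cnj (T \<psi> n)" by (simp add: l2_inner_unit_vector)
  finally show "\<eta> n = T \<psi> n" by simp
qed

lemma maximal_real_symmetric_domain_selfadjoint:
  assumes D: "real_symmetric_domain D"
    and maximal: "\<And>D'. real_symmetric_domain D' \<Longrightarrow> D \<subseteq> D' \<Longrightarrow> D' = D"
  shows "selfadjoint_op D T"
proof -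
  have D0_D: "D0 \<subseteq> D" and D_dom: "D \<subseteq> dom_max"
    and D_lincomb: "\<And>x y c. x \<in> D \<Longrightarrow> y \<in> D \<Longrightarrow> (\<lambda>n. x n + c * y n) \<in> D"
    and D_symmetric: "\<And>x y. x \<in> D \<Longrightarrow> y \<in> D \<Longrightarrow> symmetric_pair x y"
    using D by (auto simp: real_symmetric_domain_def)
  have adjoint: "\<psi> \<in> D \<longleftrightarrow> (\<exists>\<eta>\<in>l2. \<forall>\<phi>\<in>D. l2_inner \<psi> (T \<phi>) = l2_inner \<eta> \<phi>)"
    if "\<psi> \<in> l2" for \<psi>
  proof
    assume "\<psi> \<in> D"
    then show "\<exists>\<eta>\<in>l2. \<forall>\<phi>\<in>D. l2_inner \<psi> (T \<phi>) = l2_inner \<eta> \<phi>"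
      using D_dom D_symmetric by (auto simp: dom_max_def symmetric_pair_def)
  next
    assume "\<exists>\<eta>\<in>l2. \<forall>\<phi>\<in>D. l2_inner \<psi> (T \<phi>) = l2_inner \<eta> \<phi>"
    then obtain \<eta> where "\<eta> \<in> l2" and \<eta>: "\<forall>\<phi>\<in>D. l2_inner \<psi> (T \<phi>) = l2_inner \<eta> \<phi>" by blast
    then have "\<eta> = T \<psi>" using D0_D by (intro formal_adjoint_unique) auto
    then have "\<psi> \<in> dom_max" using \<open>\<eta> \<in> l2\<close> \<open>\<psi> \<in> l2\<close> by (simp add: dom_max_def)
    moreover have "\<forall>x\<in>D. symmetric_pair x \<psi>"
      using \<eta> \<open>\<eta> = T \<psi>\<close> \<open>\<psi> \<in> dom_max\<close> D_dom symmetric_pair_commute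
      by (auto simp: symmetric_pair_def)
    ultimately show "\<psi> \<in> D" using maximal_real_symmetric_domain_adjoint[OF D maximal] by blast
  qed
  show ?thesis
    unfolding selfadjoint_op_def
    using D_dom D_lincomb D_symmetric adjoint linear[of 1 _ _]
    by (auto simp: dom_max_def symmetric_pair_def)
qed

theorem selfadjoint_extension_exists: "\<exists>D. D0 \<subseteq> D \<and> selfadjoint_op D T"
  using maximal_real_symmetric_domain_exists maximal_real_symmetric_domain_selfadjoint
  by (auto simp: real_symmetric_domain_def)

end

theorem proposition4p1:
  fixes k l :: nat and \<xi> :: complex and f :: "nat \<Rightarrow> real"
  assumes "l < k" and "\<And>n. f n \<ge> 0"
  shows "same_hilbert_dim (defect_space (opA k l \<xi> f) \<i>) (defect_space (opA k l \<xi> f) (- \<i>))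
         \<and> (\<exists>D T. D0 \<subseteq> D \<and> (\<forall>x\<in>D0. T x = opA k l \<xi> f x) \<and> selfadjoint_op D T)"
proof -
  obtain u where u: "cmod u = 1" "cnj \<xi> * u ^ (k - l) = \<xi>"
    using unimodular_root_exists[of "k - l" \<xi>] assms(1) by auto
  interpret conj_real_operator "opA k l \<xi> f" u
  proof
    show "opA k l \<xi> f x \<in> l2" if "x \<in> D0" for x
      using opA_D0[OF that] D0_subset_l2 by blast
    show "conjugation u (opA k l \<xi> f x) = opA k l \<xi> f (conjugation u x)" for x
      using conjugation_opA[OF u(1) _ u(2)] assms(1) by simp
  qed (use opA_lincomb l2_inner_opA u(1) in auto)
  show ?thesis
    using same_hilbert_dim_defect_spaces[of \<i>] selfadjoint_extension_exists by auto
qed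

end
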